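(* In the setting below, assume $f(\cdot,\xi)$ is convex for all $\xi\in\Xi$. Then for all $N\in\mathbb N$, $$\theta^2\,\mathbb E\big[\|u_N^*-u^*\|_{\mathcal U}^{2(\varrho-1)}\big]\le \frac1N\,C_{\mathcal H;\mathcal U^*}^2\,\sigma_{\mathrm Df}^2.$$
   Context: Let $U$ be a separable Hilbert space (identified with its dual, inner product $(\cdot,\cdot)_U$), $W$ a separable Banach space with dual $W^*$, and $B:U\to W$ a compact linear operator with adjoint $B^*$. Let $\psi:U\to[0,\infty]$ be proper, closed and convex with bounded domain $\mathcal D(\psi)=\{u:\psi(u)<\infty\}$. Let $U_0\subset U$ be open, convex and bounded with $\mathcal D(\psi)\subset U_0$. Let $\Xi$ be a complete separable metric space, $\boldsymbol\xi$ a $\Xi$-valued random element, and $\boldsymbol\xi^1,\boldsymbol\xi^2,\ldots$ i.i.d. copies of $\boldsymbol\xi$ on a complete probability space $(\Omega,\mathcal F,P)$. Let $f:B(U_0)\times\Xi\to\mathbb R$ be such that $f(\cdot,\xi)$ is continuous on $B(\mathcal D(\psi))$, $f(w,\cdot)$ is measurable, and $|f(Bu,\xi)|\le \zeta_f(\xi)$ on $U_0\times\Xi$ with $\zeta_f$ integrable. Assume: for each $\xi$, $g_\xi(u)=f(Bu,\xi)$ is continuously differentiable on $U_0$; there is a Carathéodory map $\mathrm D_wf:B(\mathcal D(\psi))\times\Xi\to W^*$ with $\nabla g_\xi(u)=B^*\mathrm D_wf(Bu,\xi)$ on $\mathcal D(\psi)\times\Xi$; there is an integrable $\zeta_{\mathrm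 Df}$ with $\|\nabla g_\xi(u)\|_U\le\zeta_{\mathrm Df}(\xi)$ on $U_0\times\Xi$ and $\|\mathrm D_wf(Bu,\xi)\|_{W^*}\le\zeta_{\mathrm Df}(\xi)$ on $\mathcal D(\psi)\times\Xi$. Let $F(w)=\mathbb E[f(w,\boldsymbol\xi)]$, $\mathrm DF(w)=\mathbb E[\mathrm D_wf(w,\boldsymbol\xi)]$, $G(u)=F(Bu)+\psi(u)$, $\hat F_N(w)=\frac1N\sum_{i=1}^Nf(w,\boldsymbol\xi^i)$. Let $u^*$ be a solution of $\min_{u\in U}G(u)$ and for each $N$ let $u_N^*:\Omega\to U$ be measurable with $u_N^*(\omega)$ a solution of $\min_{u\in U}\hat F_N(Bu,\omega)+\psi(u)$. Further assume: $\mathcal U$ is a Banach space with $\mathcal U^*\hookrightarrow U\hookrightarrow\mathcal U$, $\mathcal H$ is a separable Hilbert space with $\mathcal H\hookrightarrow\mathcal U^*$ (embedding constant $C_{\mathcal H;\mathcal U^*}$), and $|(v,u)_U|\le\|v\|_{\mathcal U^*}\|u\|_{\mathcal U}$ for all $v\in\mathcal U^*$, $u\in U$; there are $\theta\in(0,\infty)$, $\varrho\in[2,\infty)$ with $(B^*\mathrm DF(Bu^* ),u-u^* )_U+\psi(u)-\psi(u^* )\ge\theta\|u-u^*\|_{\mathcal U}^{\varrho}$ for all $u\in U$; the map $\xi\mapsto\nabla g_\xi(u^* )\in\mathcal H$ is integrable and $\sigma_{\mathrm Df}=(\mathbb E[\|\nabla g_{\boldsymbol\xi}(u^* )-\mathbb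 E[\nabla g_{\boldsymbol\xi}(u^* )]\|_{\mathcal H}^2])^{1/2}<\infty$. *)

theory Defs
  imports "HOL-Analysis.Analysis" "HOL-Probability.Probability"
begin

definition compact_operator :: "('a::real_normed_vector \<Rightarrow>\<^sub>L 'b::real_normed_vector) \<Rightarrow> bool" where
  "compact_operator B \<longleftrightarrow> compact (closure (blinfun_apply B ` ball 0 1))"

definition edom :: "('a \<Rightarrow> ereal) \<Rightarrow> 'a set" where
  "edom \<psi> = {u. \<psi> u < \<infinity>}"

definition proper_fun :: "('a \<Rightarrow> ereal) \<Rightarrow> bool" where
  "proper_fun \<psi> \<longleftrightarrow> (\<forall>u. \<psi> u > -\<infinity>) \<and> (\<exists>u. \<psi> u < \<infinity>)"

definition closed_fun :: "('a::topological_space \<Rightarrow> ereal) \<Rightarrow> bool" where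
  "closed_fun \<psi> \<longleftrightarrow> closed {(u, t::real). \<psi> u \<le> ereal t}"

definition convex_fun :: "('a::real_vector \<Rightarrow> ereal) \<Rightarrow> bool" where
  "convex_fun \<psi> \<longleftrightarrow> (\<forall>x y (t::real). 0 \<le> t \<and> t \<le> 1 \<longrightarrow>
      \<psi> ((1 - t) *\<^sub>R x + t *\<^sub>R y) \<le> ereal (1 - t) * \<psi> x + ereal t * \<psi> y)"

end

theory Submission
  imports Defs
begin

(* Write d = u_N - ustar. Convexity of f(., xi) makes the gradient of g_xi at ustar a subgradient, so
   (grad g_{xi^i}(ustar), d) <= g_{xi^i}(u_N) - g_{xi^i}(ustar). Averaging over the sample, using that u_N
   minimizes the empirical objective and adding the growth condition at ustar leaves
     theta ||d||^rho <= -(1/N) (sum_i (grad g_{xi^i}(ustar) - E grad g(ustar)), d)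
                     <= (C/N) ||sum_i (grad g_{xi^i}(ustar) - E grad g(ustar))||_H ||d||_U.
   Dividing by ||d||_U and squaring bounds theta^2 ||d||^(2(rho-1)) by the squared norm of a sum of
   N i.i.d. centred H-valued terms, whose expectation is N sigma^2 since the cross terms vanish by
   independence. *)

lemma convex_on_compose_linear:
  assumes "convex_on (L ` S) f" and "linear L" and "convex S"
  shows "convex_on S (\<lambda>x. f (L x))"
proof (rule convex_onI[OF _ \<open>convex S\<close>])
  fix t :: real and x y assume "0 < t" "t < 1" "x \<in> S" "y \<in> S"
  then show "f (L ((1 - t) *\<^sub>R x + t *\<^sub>R y)) \<le> (1 - t) * f (L x) + t * f (L y)"
    using convex_onD[OF assms(1), of t "L x" "L y"] \<open>linear L\<close>
    by (simp add: linear_add linear_scale)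
qed

lemma convex_on_imp_above_tangent_vector:
  fixes g :: "'a::real_normed_vector \<Rightarrow> real"
  assumes "convex_on S g" and "a \<in> S" and "b \<in> S"
    and deriv: "(g has_derivative g') (at a)"
  shows "g' (b - a) \<le> g b - g a"
proof -
  define \<gamma> where "\<gamma> = (\<lambda>t. g (a + t *\<^sub>R (b - a)))"
  have "((\<lambda>t. a + t *\<^sub>R (b - a)) has_derivative (\<lambda>t. t *\<^sub>R (b - a))) (at 0)"
    by (auto intro!: derivative_eq_intros)
  from has_derivative_compose[OF this, of g g'] deriv
  have "(\<gamma> has_derivative (\<lambda>t. g' (t *\<^sub>R (b - a)))) (at 0)"
    by (simp add: \<gamma>_def o_def)
  moreover have "(\<lambda>t. g' (t *\<^sub>R (b - a))) = (\<lambda>t. g' (b - a) * t)"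
    using bounded_linear.linear[OF has_derivative_bounded_linear[OF deriv]]
    by (simp add: linear_scale mult.commute)
  ultimately have "(\<gamma> has_real_derivative g' (b - a)) (at 0)"
    by (simp add: has_field_derivative_def)
  then have "((\<lambda>t. (\<gamma> t - \<gamma> 0) / t) \<longlongrightarrow> g' (b - a)) (at_right 0)"
    by (simp add: DERIV_def filterlim_at_split)
  moreover have "\<forall>\<^sub>F t in at_right 0. (\<gamma> t - \<gamma> 0) / t \<le> g b - g a"
    using eventually_at_right_real[OF zero_less_one]
  proof eventually_elim
    fix t :: real assume "t \<in> {0<..<1}"
    then have "0 < t" "t < 1" by auto
    have "\<gamma> t \<le> (1 - t) * g a + t * g b"
      using convex_onD[OF assms(1), of t a b] \<open>0 < t\<close> \<open>t < 1\<close> assms(2,3)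
      by (simp add: \<gamma>_def algebra_simps)
    then have "\<gamma> t - \<gamma> 0 \<le> t * (g b - g a)"
      by (simp add: \<gamma>_def algebra_simps)
    then show "(\<gamma> t - \<gamma> 0) / t \<le> g b - g a"
      using \<open>0 < t\<close> by (simp add: divide_le_eq mult.commute)
  qed
  ultimately show ?thesis by (rule tendsto_upperbound) simp
qed

lemma (in prob_space) indep_vars_imp_indep_var:
  assumes ind: "indep_vars M' X I" and "i \<in> I" "j \<in> I" "i \<noteq> j"
  shows "indep_var (M' i) (X i) (M' j) (X j)"
proof -
  let ?F = "\<lambda>i. sigma_sets (space M) {X i -` A \<inter> space M | A. A \<in> sets (M' i)}"
  have rv: "\<forall>i\<in>I. random_variable (M' i) (X i)" and F: "indep_sets ?F I"
    using ind unfolding indep_vars_def by auto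
  show ?thesis
    unfolding indep_var_eq indep_sets2_eq
  proof (intro conjI ballI)
    show "random_variable (M' i) (X i)" "random_variable (M' j) (X j)"
      using rv assms(2,3) by auto
    show "?F i \<subseteq> events" "?F j \<subseteq> events"
      using F assms(2,3) unfolding indep_sets_def by auto
    fix a b assume "a \<in> ?F i" "b \<in> ?F j"
    then have "prob (\<Inter>k\<in>{i, j}. if k = i then a else b) = (\<Prod>k\<in>{i, j}. prob (if k = i then a else b))"
      using assms(2-4) by (intro indep_setsD[OF F]) auto
    then show "prob (a \<inter> b) = prob a * prob b"
      using assms(4) by (simp add: Int_commute)
  qed
qed

lemma (in prob_space) indep_var_integral_inner:
  fixes X Y :: "'a \<Rightarrow> 'x::topological_space"
    and f g :: "'x \<Rightarrow> 'h::{real_inner, complete_space, second_countable_topology}"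
  assumes ind: "indep_var borel X borel Y"
    and [measurable]: "f \<in> borel_measurable borel" "g \<in> borel_measurable borel"
    and "integrable (distr M borel X) f" "integrable (distr M borel Y) g"
    and "integrable M (\<lambda>\<omega>. f (X \<omega>) \<bullet> g (Y \<omega>))"
  shows "(\<integral>\<omega>. f (X \<omega>) \<bullet> g (Y \<omega>) \<partial>M) = integral\<^sup>L (distr M borel X) f \<bullet> integral\<^sup>L (distr M borel Y) g"
proof -
  have [measurable]: "random_variable borel X" "random_variable borel Y"
    using ind by (auto simp: indep_var_eq)
  interpret PX: prob_space "distr M borel X" by (rule prob_space_distr) simp
  interpret PY: prob_space "distr M borel Y" by (rule prob_space_distr) simp
  interpret PXY: pair_sigma_finite "distr M borel X" "distr M borel Y" ..
  have joint: "distr M (borel \<Otimes>\<^sub>M borel) (\<lambda>\<omega>. (X \<omega>, Y \<omega>)) = distr M borel X \<Otimes>\<^sub>M distr M borel Y"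
    using ind by (simp add: indep_var_distribution_eq)
  have pair_meas: "(\<lambda>\<omega>. (X \<omega>, Y \<omega>)) \<in> measurable M (borel \<Otimes>\<^sub>M borel)" by measurable
  have inner_meas: "(\<lambda>p. f (fst p) \<bullet> g (snd p)) \<in> borel_measurable (borel \<Otimes>\<^sub>M borel)"
    by measurable
  have product_int: "integrable (distr M borel X \<Otimes>\<^sub>M distr M borel Y) (\<lambda>p. f (fst p) \<bullet> g (snd p))"
    using integrable_distr_eq[OF pair_meas inner_meas] joint assms(6) by simp
  have "(\<integral>\<omega>. f (X \<omega>) \<bullet> g (Y \<omega>) \<partial>M) = (\<integral>x. (\<integral>y. f x \<bullet> g y \<partial>distr M borel Y) \<partial>distr M borel X)"
    using integral_distr[OF pair_meas inner_meas] joint PXY.integral_fst'[OF product_int] by simp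
  also have "\<dots> = integral\<^sup>L (distr M borel X) f \<bullet> integral\<^sup>L (distr M borel Y) g"
    using assms(4,5) by simp
  finally show ?thesis .
qed

lemma (in prob_space) integral_norm_sum_sq_iid_centred:
  fixes \<xi>s :: "'i \<Rightarrow> 'a \<Rightarrow> 'x::topological_space"
    and \<phi> :: "'x \<Rightarrow> 'h::{real_inner, complete_space, second_countable_topology}"
  assumes "finite I" and ind: "indep_vars (\<lambda>_. borel) \<xi>s I"
    and distr: "\<And>i. i \<in> I \<Longrightarrow> distr M borel (\<xi>s i) = \<mu>"
    and [measurable]: "\<phi> \<in> borel_measurable borel"
    and "integrable \<mu> \<phi>" and centred: "integral\<^sup>L \<mu> \<phi> = 0"
    and sq_int: "integrable \<mu> (\<lambda>x. (norm (\<phi> x))\<^sup>2)"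
  shows "integrable M (\<lambda>\<omega>. (norm (\<Sum>i\<in>I. \<phi> (\<xi>s i \<omega>)))\<^sup>2)"
    and "expectation (\<lambda>\<omega>. (norm (\<Sum>i\<in>I. \<phi> (\<xi>s i \<omega>)))\<^sup>2) = card I * (\<integral>x. (norm (\<phi> x))\<^sup>2 \<partial>\<mu>)"
proof -
  have [measurable]: "\<xi>s i \<in> borel_measurable M" if "i \<in> I" for i
    using ind that by (simp add: indep_vars_def)
  have sq: "integrable M (\<lambda>\<omega>. (norm (\<phi> (\<xi>s i \<omega>)))\<^sup>2)"
    "expectation (\<lambda>\<omega>. (norm (\<phi> (\<xi>s i \<omega>)))\<^sup>2) = (\<integral>x. (norm (\<phi> x))\<^sup>2 \<partial>\<mu>)"
    if "i \<in> I" for i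
    using that sq_int distr[OF that] integrable_distr_eq[of "\<xi>s i" M borel "\<lambda>x. (norm (\<phi> x))\<^sup>2"]
      integral_distr[of "\<xi>s i" M borel "\<lambda>x. (norm (\<phi> x))\<^sup>2"]
    by simp_all
  have cross_int: "integrable M (\<lambda>\<omega>. \<phi> (\<xi>s i \<omega>) \<bullet> \<phi> (\<xi>s j \<omega>))" if "i \<in> I" "j \<in> I" for i j
  proof (rule Bochner_Integration.integrable_bound)
    show "integrable M (\<lambda>\<omega>. (norm (\<phi> (\<xi>s i \<omega>)))\<^sup>2 + (norm (\<phi> (\<xi>s j \<omega>)))\<^sup>2)"
      using sq that by auto
    show "(\<lambda>\<omega>. \<phi> (\<xi>s i \<omega>) \<bullet> \<phi> (\<xi>s j \<omega>)) \<in> borel_measurable M"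
      using that by measurable
    have "\<bar>x \<bullet> y\<bar> \<le> (norm x)\<^sup>2 + (norm y)\<^sup>2" for x y :: 'h
    proof -
      have "\<bar>x \<bullet> y\<bar> \<le> norm x * norm y" by (rule Cauchy_Schwarz_ineq2)
      also have "\<dots> \<le> (norm x)\<^sup>2 + (norm y)\<^sup>2"
        using sum_squares_bound[of "norm x" "norm y"] mult_nonneg_nonneg[OF norm_ge_zero norm_ge_zero, of x y]
        by linarith
      finally show ?thesis .
    qed
    then show "AE \<omega> in M. norm (\<phi> (\<xi>s i \<omega>) \<bullet> \<phi> (\<xi>s j \<omega>)) \<le> norm ((norm (\<phi> (\<xi>s i \<omega>)))\<^sup>2 + (norm (\<phi> (\<xi>s j \<omega>)))\<^sup>2)"
      by simp
  qed
  have cross: "expectation (\<lambda>\<omega>. \<phi> (\<xi>s i \<omega>) \<bullet> \<phi> (\<xi>s j \<omega>))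
      = (if i = j then \<integral>x. (norm (\<phi> x))\<^sup>2 \<partial>\<mu> else 0)"
    if "i \<in> I" "j \<in> I" for i j
  proof (cases "i = j")
    case False
    then show ?thesis
      using indep_var_integral_inner[OF indep_vars_imp_indep_var[OF ind] _ _ _ _ cross_int] that
        distr centred \<open>integrable \<mu> \<phi>\<close>
      by simp
  qed (use sq that in \<open>simp add: power2_norm_eq_inner\<close>)
  have expand: "(norm (\<Sum>i\<in>I. \<phi> (\<xi>s i \<omega>)))\<^sup>2 = (\<Sum>i\<in>I. \<Sum>j\<in>I. \<phi> (\<xi>s i \<omega>) \<bullet> \<phi> (\<xi>s j \<omega>))" for \<omega>
    by (simp add: power2_norm_eq_inner inner_sum_left inner_sum_right) (rule sum.swap)
  show "integrable M (\<lambda>\<omega>. (norm (\<Sum>i\<in>I. \<phi> (\<xi>s i \<omega>)))\<^sup>2)"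
    unfolding expand using cross_int by auto
  have "expectation (\<lambda>\<omega>. (norm (\<Sum>i\<in>I. \<phi> (\<xi>s i \<omega>)))\<^sup>2)
      = (\<Sum>i\<in>I. \<Sum>j\<in>I. expectation (\<lambda>\<omega>. \<phi> (\<xi>s i \<omega>) \<bullet> \<phi> (\<xi>s j \<omega>)))"
    unfolding expand using cross_int
    by (simp add: Bochner_Integration.integral_sum Bochner_Integration.integrable_sum)
  also have "\<dots> = (\<Sum>i\<in>I. \<Sum>j\<in>I. if i = j then \<integral>x. (norm (\<phi> x))\<^sup>2 \<partial>\<mu> else 0)"
    using cross by (intro sum.cong refl) auto
  also have "\<dots> = card I * (\<integral>x. (norm (\<phi> x))\<^sup>2 \<partial>\<mu>)"
    using \<open>finite I\<close> by simp
  finally show "expectation (\<lambda>\<omega>. (norm (\<Sum>i\<in>I. \<phi> (\<xi>s i \<omega>)))\<^sup>2) = card I * (\<integral>x. (norm (\<phi> x))\<^sup>2 \<partial>\<mu>)" .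
qed

lemma (in prob_space) integral_norm_sum_sq_iid:
  fixes \<xi>s :: "'i \<Rightarrow> 'a \<Rightarrow> 'x::topological_space"
    and \<phi> :: "'x \<Rightarrow> 'h::{real_inner, complete_space, second_countable_topology}"
  assumes "finite I" and "I \<noteq> {}" and ind: "indep_vars (\<lambda>_. borel) \<xi>s I"
    and distr: "\<And>i. i \<in> I \<Longrightarrow> distr M borel (\<xi>s i) = \<mu>"
    and [measurable]: "\<phi> \<in> borel_measurable borel" and "integrable \<mu> \<phi>"
    and "integrable \<mu> (\<lambda>x. (norm (\<phi> x - integral\<^sup>L \<mu> \<phi>))\<^sup>2)"
  shows "integrable M (\<lambda>\<omega>. (norm (\<Sum>i\<in>I. \<phi> (\<xi>s i \<omega>) - integral\<^sup>L \<mu> \<phi>))\<^sup>2)"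
    and "expectation (\<lambda>\<omega>. (norm (\<Sum>i\<in>I. \<phi> (\<xi>s i \<omega>) - integral\<^sup>L \<mu> \<phi>))\<^sup>2)
      = card I * (\<integral>x. (norm (\<phi> x - integral\<^sup>L \<mu> \<phi>))\<^sup>2 \<partial>\<mu>)"
proof -
  obtain i where "i \<in> I" using \<open>I \<noteq> {}\<close> by blast
  then interpret sample: prob_space \<mu>
    using ind distr by (auto simp: indep_vars_def intro!: prob_space_distr)
  have "(\<integral>x. 1 *\<^sub>R integral\<^sup>L \<mu> \<phi> \<partial>\<mu>) = integral\<^sup>L \<mu> \<phi>"
    by (subst integral_scaleR_left) (simp_all add: sample.prob_space)
  then have "(\<integral>x. \<phi> x - integral\<^sup>L \<mu> \<phi> \<partial>\<mu>) = 0"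
    using \<open>integrable \<mu> \<phi>\<close> by simp
  from integral_norm_sum_sq_iid_centred[OF \<open>finite I\<close> ind distr _ _ this] assms(6,7)
  show "integrable M (\<lambda>\<omega>. (norm (\<Sum>i\<in>I. \<phi> (\<xi>s i \<omega>) - integral\<^sup>L \<mu> \<phi>))\<^sup>2)"
    and "expectation (\<lambda>\<omega>. (norm (\<Sum>i\<in>I. \<phi> (\<xi>s i \<omega>) - integral\<^sup>L \<mu> \<phi>))\<^sup>2)
      = card I * (\<integral>x. (norm (\<phi> x - integral\<^sup>L \<mu> \<phi>))\<^sup>2 \<partial>\<mu>)"
    by auto
qed

lemma minimizer_in_edom:
  assumes "proper_fun \<psi>" and min: "\<And>u. ereal (F x) + \<psi> x \<le> ereal (F u) + \<psi> u"
  shows "x \<in> edom \<psi>"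
proof -
  obtain u where "\<psi> u < \<infinity>"
    using \<open>proper_fun \<psi>\<close> by (auto simp: proper_fun_def)
  then show ?thesis
    using min[of u] by (auto simp: edom_def)
qed

lemma saa_basic_inequality:
  fixes g :: "'u::real_inner \<Rightarrow> 'x \<Rightarrow> real" and G :: "'x \<Rightarrow> 'u" and xs :: "nat \<Rightarrow> 'x"
    and \<psi> :: "'u \<Rightarrow> ereal"
  assumes "N \<ge> 1" and "proper_fun \<psi>" and "edom \<psi> \<subseteq> U" and u: "u \<in> edom \<psi>" and w: "w \<in> edom \<psi>"
    and convex: "\<And>x. convex_on U (\<lambda>v. g v x)"
    and deriv: "\<And>x. ((\<lambda>v. g v x) has_derivative (\<lambda>v. G x \<bullet> v)) (at u)"
    and w_min: "ereal ((1 / real N) * (\<Sum>i=1..N. g w (xs i))) + \<psi> w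
      \<le> ereal ((1 / real N) * (\<Sum>i=1..N. g u (xs i))) + \<psi> u"
    and growth: "ereal \<gamma> \<le> ereal (G_mean \<bullet> (w - u)) + \<psi> w - \<psi> u"
  shows "\<gamma> \<le> - ((\<Sum>i=1..N. G (xs i) - G_mean) \<bullet> (w - u)) / real N"
proof -
  obtain p q where p: "\<psi> w = ereal p" and q: "\<psi> u = ereal q"
    using u w \<open>proper_fun \<psi>\<close> by (cases "\<psi> w"; cases "\<psi> u") (auto simp: edom_def proper_fun_def)
  have "G x \<bullet> (w - u) \<le> g w x - g u x" for x
    using convex_on_imp_above_tangent_vector[OF convex _ _ deriv] u w \<open>edom \<psi> \<subseteq> U\<close> by blast
  then have "(\<Sum>i=1..N. G (xs i) \<bullet> (w - u)) \<le> (\<Sum>i=1..N. g w (xs i)) - (\<Sum>i=1..N. g u (xs i))"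
    by (simp add: sum_subtractf[symmetric] sum_mono)
  also have "\<dots> \<le> real N * (q - p)"
  proof -
    have "(\<Sum>i=1..N. g w (xs i)) / real N - (\<Sum>i=1..N. g u (xs i)) / real N \<le> q - p"
      using w_min by (simp add: p q)
    then show ?thesis
      using \<open>N \<ge> 1\<close> by (simp add: diff_divide_distrib[symmetric] divide_le_eq mult.commute)
  qed
  finally have "(\<Sum>i=1..N. G (xs i)) \<bullet> (w - u) \<le> real N * (q - p)"
    by (simp add: inner_sum_left)
  moreover have "\<gamma> * real N \<le> (G_mean \<bullet> (w - u) + p - q) * real N"
    using growth by (intro mult_right_mono) (simp_all add: p q)
  ultimately show ?thesis
    using \<open>N \<ge> 1\<close>
    by (simp add: sum_subtractf inner_diff_left sum_constant_scaleR le_divide_eq algebra_simps)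
qed

lemma powr_le_mult_imp_sq_le:
  fixes \<theta> r A :: real
  assumes "0 \<le> \<theta>" and "0 \<le> r" and le: "\<theta> * r powr \<rho> \<le> A * r"
  shows "\<theta>\<^sup>2 * r powr (2 * (\<rho> - 1)) \<le> A\<^sup>2"
proof (cases "r = 0")
  case False
  with \<open>0 \<le> r\<close> have "0 < r" by simp
  moreover have "r powr \<rho> = r powr (\<rho> - 1) * r"
    using \<open>0 < r\<close> by (simp add: powr_diff)
  ultimately have "\<theta> * r powr (\<rho> - 1) \<le> A"
    using le by (simp add: mult.assoc)
  then have "(\<theta> * r powr (\<rho> - 1))\<^sup>2 \<le> A\<^sup>2"
    using \<open>0 \<le> \<theta>\<close> by (intro power_mono) auto
  moreover have "(\<theta> * r powr (\<rho> - 1))\<^sup>2 = \<theta>\<^sup>2 * r powr (2 * (\<rho> - 1))"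
    using \<open>0 < r\<close> by (simp only: power_mult_distrib powr_power) simp
  ultimately show ?thesis by simp
qed simp

lemma saa_solution_error_bound:
  fixes g :: "'u::real_inner \<Rightarrow> 'x \<Rightarrow> real" and \<psi> :: "'u \<Rightarrow> ereal" and xs :: "nat \<Rightarrow> 'x"
    and h :: "'x \<Rightarrow> 'h::real_normed_vector" and e :: "'h \<Rightarrow>\<^sub>L ('v::real_normed_vector \<Rightarrow>\<^sub>L real)"
    and k :: "('v \<Rightarrow>\<^sub>L real) \<Rightarrow>\<^sub>L 'u" and j :: "'u \<Rightarrow>\<^sub>L 'v"
  assumes "N \<ge> 1" and "proper_fun \<psi>" and "edom \<psi> \<subseteq> U" and "u \<in> edom \<psi>" and "w \<in> edom \<psi>"
    and "0 \<le> \<theta>"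
    and "\<And>x. convex_on U (\<lambda>v. g v x)"
    and "\<And>x. ((\<lambda>v. g v x) has_derivative (\<lambda>v. k (e (h x)) \<bullet> v)) (at u)"
    and "ereal ((1 / real N) * (\<Sum>i=1..N. g w (xs i))) + \<psi> w
      \<le> ereal ((1 / real N) * (\<Sum>i=1..N. g u (xs i))) + \<psi> u"
    and "ereal (\<theta> * norm (j (w - u)) powr \<rho>) \<le> ereal (k (e m) \<bullet> (w - u)) + \<psi> w - \<psi> u"
    and duality: "\<And>v. \<bar>k v \<bullet> (w - u)\<bar> \<le> norm v * norm (j (w - u))"
  shows "\<theta>\<^sup>2 * norm (j (w - u)) powr (2 * (\<rho> - 1)) \<le> (norm e / N)\<^sup>2 * (norm (\<Sum>i=1..N. h (xs i) - m))\<^sup>2"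
proof -
  let ?S = "\<Sum>i=1..N. h (xs i) - m"
  have "\<theta> * norm (j (w - u)) powr \<rho> \<le> - ((\<Sum>i=1..N. k (e (h (xs i))) - k (e m)) \<bullet> (w - u)) / N"
    by (rule saa_basic_inequality) (use assms in auto)
  also have "\<dots> = - (k (e ?S) \<bullet> (w - u)) / N"
    by (simp add: blinfun.sum_right blinfun.diff_right)
  also have "\<dots> \<le> norm e * norm ?S * norm (j (w - u)) / N"
    using duality[of "e ?S"] mult_right_mono[OF norm_blinfun norm_ge_zero, of e ?S "j (w - u)"]
    by (intro divide_right_mono) linarith+
  finally show ?thesis
    using \<open>0 \<le> \<theta>\<close> powr_le_mult_imp_sq_le[of \<theta> "norm (j (w - u))" \<rho> "norm e * norm ?S / N"]
    by (simp add: power_divide power_mult_distrib mult_ac)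
qed

lemma nn_integral_le_integral_of_scaled_bound:
  assumes "0 < a" and "integrable M Y"
    and nonneg: "\<And>\<omega>. \<omega> \<in> space M \<Longrightarrow> 0 \<le> X \<omega>"
    and bound: "\<And>\<omega>. \<omega> \<in> space M \<Longrightarrow> a * X \<omega> \<le> Y \<omega>"
  shows "ennreal a * (\<integral>\<^sup>+\<omega>. ennreal (X \<omega>) \<partial>M) \<le> ennreal (\<integral>\<omega>. Y \<omega> \<partial>M)"
proof -
  have Y_nonneg: "\<omega> \<in> space M \<Longrightarrow> 0 \<le> Y \<omega>" for \<omega>
    using nonneg[of \<omega>] bound[of \<omega>] \<open>0 < a\<close> by (meson mult_nonneg_nonneg less_imp_le order_trans)
  have "(\<integral>\<^sup>+\<omega>. ennreal (X \<omega>) \<partial>M) \<le> (\<integral>\<^sup>+\<omega>. ennreal (Y \<omega> / a) \<partial>M)"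
    using bound \<open>0 < a\<close> by (intro nn_integral_mono ennreal_leI) (simp add: pos_le_divide_eq mult.commute)
  also have "\<dots> = ennreal ((\<integral>\<omega>. Y \<omega> \<partial>M) / a)"
    using \<open>integrable M Y\<close> Y_nonneg \<open>0 < a\<close>
    by (subst nn_integral_eq_integral) (auto intro: AE_I2)
  finally have "ennreal a * (\<integral>\<^sup>+\<omega>. ennreal (X \<omega>) \<partial>M) \<le> ennreal a * ennreal ((\<integral>\<omega>. Y \<omega> \<partial>M) / a)"
    by (rule mult_left_mono) simp
  also have "\<dots> = ennreal (\<integral>\<omega>. Y \<omega> \<partial>M)"
    using \<open>0 < a\<close> integral_nonneg_AE Y_nonneg by (simp add: ennreal_mult[symmetric] AE_I2)
  finally show ?thesis .
qed

theorem theorem3p11: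
  fixes B :: "'u::{real_inner, complete_space, second_countable_topology} \<Rightarrow>\<^sub>L 'w::{banach, second_countable_topology}"
    and \<psi> :: "'u \<Rightarrow> ereal"
    and U0 :: "'u set"
    and M :: "'o measure"
    and \<xi> :: "'o \<Rightarrow> 'x::polish_space"
    and \<xi>s :: "nat \<Rightarrow> 'o \<Rightarrow> 'x"
    and f :: "'w \<Rightarrow> 'x \<Rightarrow> real"
    and \<zeta>f \<zeta>Df :: "'x \<Rightarrow> real"
    and gradg :: "'u \<Rightarrow> 'x \<Rightarrow> 'u"
    and Dwf :: "'w \<Rightarrow> 'x \<Rightarrow> ('w \<Rightarrow>\<^sub>L real)"
    and ustar :: "'u"
    and uN :: "nat \<Rightarrow> 'o \<Rightarrow> 'u"
    and j :: "'u \<Rightarrow>\<^sub>L 'uu::banach"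
    and k :: "('uu \<Rightarrow>\<^sub>L real) \<Rightarrow>\<^sub>L 'u"
    and e :: "'h::{real_inner, complete_space, second_countable_topology} \<Rightarrow>\<^sub>L ('uu \<Rightarrow>\<^sub>L real)"
    and hgrad :: "'x \<Rightarrow> 'h"
    and \<theta> \<rho> :: real
    and N :: nat
  defines "\<mu> \<equiv> distr M borel \<xi>"
  assumes B_compact: "compact_operator B"
    and \<psi>_nonneg: "\<And>u. \<psi> u \<ge> 0"
    and \<psi>_proper: "proper_fun \<psi>" and \<psi>_closed: "closed_fun \<psi>" and \<psi>_convex: "convex_fun \<psi>"
    and \<psi>_dom_bounded: "bounded (edom \<psi>)"
    and U0: "open U0" "convex U0" "bounded U0" "edom \<psi> \<subseteq> U0"
    and M_prob: "prob_space M" and M_complete: "complete_measure M"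
    and \<xi>_meas: "\<xi> \<in> measurable M borel"
    and \<xi>s_meas: "\<And>i. i \<ge> 1 \<Longrightarrow> \<xi>s i \<in> measurable M borel"
    and \<xi>s_indep: "prob_space.indep_vars M (\<lambda>_. borel) \<xi>s {1..}"
    and \<xi>s_distr: "\<And>i. i \<ge> 1 \<Longrightarrow> distr M borel (\<xi>s i) = distr M borel \<xi>"
    and f_cont: "\<And>x. continuous_on (blinfun_apply B ` edom \<psi>) (\<lambda>w. f w x)"
    and f_meas: "\<And>w. w \<in> blinfun_apply B ` U0 \<Longrightarrow> (\<lambda>x. f w x) \<in> borel_measurable borel"
    and f_bound: "\<And>u x. u \<in> U0 \<Longrightarrow> \<bar>f (B u) x\<bar> \<le> \<zeta>f x"
    and \<zeta>f_int: "integrable \<mu> \<zeta>f"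
    and g_deriv: "\<And>x u. u \<in> U0 \<Longrightarrow>
        ((\<lambda>v. f (B v) x) has_derivative (\<lambda>v. gradg u x \<bullet> v)) (at u)"
    and g_C1: "\<And>x. continuous_on U0 (\<lambda>u. gradg u x)"
    and Dwf_cont: "\<And>x. continuous_on (blinfun_apply B ` edom \<psi>) (\<lambda>w. Dwf w x)"
    and Dwf_meas: "\<And>w. w \<in> blinfun_apply B ` edom \<psi> \<Longrightarrow> (\<lambda>x. Dwf w x) \<in> borel_measurable borel"
    and grad_adj: "\<And>u x v. u \<in> edom \<psi> \<Longrightarrow> gradg u x \<bullet> v = Dwf (B u) x (B v)"
    and \<zeta>Df_int: "integrable \<mu> \<zeta>Df"
    and gradg_bound: "\<And>u x. u \<in> U0 \<Longrightarrow> norm (gradg u x) \<le> \<zeta>Df x"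
    and Dwf_bound: "\<And>u x. u \<in> edom \<psi> \<Longrightarrow> norm (Dwf (B u) x) \<le> \<zeta>Df x"
    and ustar_min: "\<And>u. ereal (\<integral>x. f (B ustar) x \<partial>\<mu>) + \<psi> ustar \<le> ereal (\<integral>x. f (B u) x \<partial>\<mu>) + \<psi> u"
    and uN_meas: "\<And>n. n \<ge> 1 \<Longrightarrow> uN n \<in> borel_measurable M"
    and uN_min: "\<And>n \<omega> u. n \<ge> 1 \<Longrightarrow> \<omega> \<in> space M \<Longrightarrow>
        ereal ((1 / real n) * (\<Sum>i=1..n. f (B (uN n \<omega>)) (\<xi>s i \<omega>))) + \<psi> (uN n \<omega>)
          \<le> ereal ((1 / real n) * (\<Sum>i=1..n. f (B u) (\<xi>s i \<omega>))) + \<psi> u"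
    and j_inj: "inj (blinfun_apply j)" and k_inj: "inj (blinfun_apply k)" and e_inj: "inj (blinfun_apply e)"
    and duality: "\<And>v u. \<bar>k v \<bullet> u\<bar> \<le> norm v * norm (j u)"
    and \<theta>_pos: "\<theta> > 0" and \<rho>_ge: "\<rho> \<ge> 2"
    and growth: "\<And>u. ereal (\<integral>x. Dwf (B ustar) x (B (u - ustar)) \<partial>\<mu>) + \<psi> u - \<psi> ustar
                       \<ge> ereal (\<theta> * norm (j (u - ustar)) powr \<rho>)"
    and hgrad_rep: "\<And>x. k (e (hgrad x)) = gradg ustar x"
    and hgrad_int: "integrable \<mu> hgrad"
    and \<sigma>_finite: "integrable \<mu> (\<lambda>x. (norm (hgrad x - (\<integral>y. hgrad y \<partial>\<mu>)))\<^sup>2)"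
    and f_convex: "\<And>x. convex_on (blinfun_apply B ` U0) (\<lambda>w. f w x)"
    and N_pos: "N \<ge> 1"
  shows "ennreal (\<theta>\<^sup>2) * (\<integral>\<^sup>+ \<omega>. ennreal (norm (j (uN N \<omega> - ustar)) powr (2 * (\<rho> - 1))) \<partial>M)
           \<le> ennreal ((1 / real N) * (norm e)\<^sup>2 * (\<integral>x. (norm (hgrad x - (\<integral>y. hgrad y \<partial>\<mu>)))\<^sup>2 \<partial>\<mu>))"
proof -
  interpret prob_space M by (rule M_prob)
  have [measurable]: "hgrad \<in> borel_measurable borel"
    using borel_measurable_integrable[OF hgrad_int] by (simp add: \<mu>_def)
  define m where "m = (\<integral>y. hgrad y \<partial>\<mu>)"
  define S where "S \<omega> = (\<Sum>i=1..N. hgrad (\<xi>s i \<omega>) - m)" for \<omega>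
  have ustar: "ustar \<in> edom \<psi>"
    by (rule minimizer_in_edom[OF \<psi>_proper ustar_min])
  have mean_grad: "(\<integral>x. Dwf (B ustar) x (B v) \<partial>\<mu>) = k (e m) \<bullet> v" for v
    using integral_bounded_linear[OF blinfun.bounded_linear_right hgrad_int, of "k o\<^sub>L e"]
      integrable_bounded_linear[OF blinfun.bounded_linear_right hgrad_int, of "k o\<^sub>L e"]
    by (simp add: m_def grad_adj[OF ustar, symmetric] hgrad_rep)
  have pointwise: "\<theta>\<^sup>2 * norm (j (uN N \<omega> - ustar)) powr (2 * (\<rho> - 1)) \<le> (norm e / N)\<^sup>2 * (norm (S \<omega>))\<^sup>2"
    if "\<omega> \<in> space M" for \<omega>
    unfolding S_def
  proof (rule saa_solution_error_bound[where g = "\<lambda>v x. f (B v) x"])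
    show "uN N \<omega> \<in> edom \<psi>"
      by (rule minimizer_in_edom[OF \<psi>_proper uN_min[OF N_pos that]])
    show "convex_on U0 (\<lambda>v. f (B v) x)" for x
      by (rule convex_on_compose_linear[OF f_convex _ U0(2)])
        (rule bounded_linear.linear[OF blinfun.bounded_linear_right])
    show "((\<lambda>v. f (B v) x) has_derivative (\<lambda>v. k (e (hgrad x)) \<bullet> v)) (at ustar)" for x
      using g_deriv ustar U0(4) by (auto simp: hgrad_rep)
    show "ereal (\<theta> * norm (j (uN N \<omega> - ustar)) powr \<rho>) \<le> ereal (k (e m) \<bullet> (uN N \<omega> - ustar)) + \<psi> (uN N \<omega>) - \<psi> ustar"
      using growth[of "uN N \<omega>"] by (simp add: mean_grad)
  qed (use N_pos U0(4) ustar uN_min[OF N_pos that] \<psi>_proper \<theta>_pos duality in auto)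
  have S_int: "integrable M (\<lambda>\<omega>. (norm (S \<omega>))\<^sup>2)"
    and S_var: "expectation (\<lambda>\<omega>. (norm (S \<omega>))\<^sup>2) = N * (\<integral>x. (norm (hgrad x - m))\<^sup>2 \<partial>\<mu>)"
    using integral_norm_sum_sq_iid[of "{1..N}" \<xi>s \<mu> hgrad] indep_vars_subset[OF \<xi>s_indep]
      \<xi>s_distr[folded \<mu>_def] hgrad_int \<sigma>_finite N_pos
    by (simp_all add: S_def m_def)
  have "ennreal (\<theta>\<^sup>2) * (\<integral>\<^sup>+ \<omega>. ennreal (norm (j (uN N \<omega> - ustar)) powr (2 * (\<rho> - 1))) \<partial>M)
      \<le> ennreal (\<integral>\<omega>. (norm e / N)\<^sup>2 * (norm (S \<omega>))\<^sup>2 \<partial>M)"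
    using S_int \<theta>_pos pointwise by (intro nn_integral_le_integral_of_scaled_bound) auto
  also have "(\<integral>\<omega>. (norm e / N)\<^sup>2 * (norm (S \<omega>))\<^sup>2 \<partial>M) = (1 / N) * (norm e)\<^sup>2 * (\<integral>x. (norm (hgrad x - m))\<^sup>2 \<partial>\<mu>)"
    using S_var N_pos by (simp add: power2_eq_square)
  finally show ?thesis
    by (simp add: m_def)
qed

end
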